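(* Let $\omega\in(0,1/2)$ and $\tau>0$. Suppose the test statistic $z$ satisfies $z\mid\lambda\sim\mathrm{N}(\lambda,1)$, with $\lambda\sim(1-\omega)\delta_0+\omega\,\mathrm{J}(\tau^2)$ under $\mathrm{H}_0$ and $\lambda\sim\omega\delta_0+(1-\omega)\mathrm{J}(\tau^2)$ under $\mathrm{H}_1$. Then the Bayes factor in favor of $\mathrm{H}_1$ is $$\mathrm{BF}^t_{10}(z\mid\tau^2,\omega)=\frac{\omega+(1-\omega)R}{(1-\omega)+\omega R},$$ where $R=m_1(z\mid\tau^2)/m_0(z)$, with $m_0(z)$ the $\mathrm{N}(0,1)$ density at $z$ and $m_1(z\mid\tau^2)=\int \phi(z-\lambda)\,\mathrm{J}(\lambda;\tau^2)\,d\lambda$, and $$R=(1+\tau^2)^{-3/2}\,{}_1F_1\!\left(\tfrac32,\tfrac12;\ \frac{\tau^2z^2}{2(1+\tau^2)}\right).$$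
   Context: $\delta_0$ is the point mass at $0$. $\mathrm{J}(\tau^2)$ is the normal-moment density of order 1: $\mathrm{J}(\lambda;\tau^2)=\frac{\lambda^2}{(2\tau^2)^{3/2}\Gamma(3/2)}\exp\!\big(-\frac{\lambda^2}{2\tau^2}\big)$, $\lambda\in\mathbb{R}$. $\phi$ is the standard normal density. ${}_1F_1(a,b;x)=\sum_{i\ge0}\frac{(a)_i}{(b)_i\,i!}x^i$ is the confluent hypergeometric function, $(a)_i$ the rising factorial. The Bayes factor is the ratio of the marginal density of $z$ under $\mathrm{H}_1$ to that under $\mathrm{H}_0$. *)

theory Defs
  imports "HOL-Probability.Probability"
begin

definition nmom_density :: "real \<Rightarrow> real \<Rightarrow> real" where
  "nmom_density tau2 lam =
     lam\<^sup>2 / ((2 * tau2) powr (3/2) * Gamma (3/2)) * exp (- lam\<^sup>2 / (2 * tau2))"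

definition hyp1F1 :: "real \<Rightarrow> real \<Rightarrow> real \<Rightarrow> real" where
  "hyp1F1 a b x = (\<Sum>i. pochhammer a i / (pochhammer b i * fact i) * x ^ i)"

definition m0 :: "real \<Rightarrow> real" where
  "m0 z = std_normal_density z"

definition m1 :: "real \<Rightarrow> real \<Rightarrow> real" where
  "m1 z tau2 = (LINT lam|lborel. std_normal_density (z - lam) * nmom_density tau2 lam)"

definition marg_H0 :: "real \<Rightarrow> real \<Rightarrow> real \<Rightarrow> real" where
  "marg_H0 z tau2 w = (1 - w) * std_normal_density (z - 0) + w * m1 z tau2"

definition marg_H1 :: "real \<Rightarrow> real \<Rightarrow> real \<Rightarrow> real" where
  "marg_H1 z tau2 w = w * std_normal_density (z - 0) + (1 - w) * m1 z tau2"

definition BF10 :: "real \<Rightarrow> real \<Rightarrow> real \<Rightarrow> real" where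
  "BF10 z tau2 w = marg_H1 z tau2 w / marg_H0 z tau2 w"

end

theory Submission
  imports Defs
begin

text \<open>The J prior is \<open>\<lambda>\<^sup>2/\<tau>\<^sup>2\<close> times the \<open>N(0,\<tau>\<^sup>2)\<close> density, so by Gaussian conjugacy
  \<open>\<phi>(z - \<lambda>) J(\<lambda>;\<tau>\<^sup>2)\<close> is the \<open>N(0,1+\<tau>\<^sup>2)\<close> density of \<open>z\<close>, times \<open>\<lambda>\<^sup>2/\<tau>\<^sup>2\<close>, times a normal
  posterior density of \<open>\<lambda>\<close>; integrating yields the posterior second moment. Dividing by
  \<open>\<phi>(z)\<close> gives \<open>R = (1+\<tau>\<^sup>2) powr (-3/2) * exp x * (1 + 2x)\<close> with \<open>x = \<tau>\<^sup>2z\<^sup>2/(2(1+\<tau>\<^sup>2))\<close>,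
  and Kummer's identity \<open>1F1(b+1; b; x) = exp x * (1 + x/b)\<close> at \<open>b = 1/2\<close> identifies this with
  the hypergeometric form.\<close>

lemma pochhammer_plus_one_mult:
  "b * pochhammer (b + 1) n = (b + of_nat n) * pochhammer (b :: 'a :: comm_semiring_1) n"
  by (simp flip: pochhammer_rec pochhammer_rec')

lemma sums_of_nat_mult_exp_series:
  "(\<lambda>n. of_nat n * x ^ n / fact n) sums (x * exp (x :: real))"
proof -
  have "(\<lambda>n. x * (x ^ n / fact n)) sums (x * exp x)"
    using sums_mult[OF exp_converges[of x]] by (simp add: divide_inverse mult.commute)
  moreover have "x * (x ^ n / fact n) = of_nat (Suc n) * x ^ Suc n / fact (Suc n)" for n
    by (simp add: divide_simps)
  ultimately show ?thesis
    using sums_Suc_iff[where f = "\<lambda>n. of_nat n * x ^ n / fact n"] by simp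
qed

lemma hyp1F1_plus_one_same:
  assumes "0 < b"
  shows "hyp1F1 (b + 1) b x = exp x * (1 + x / b)"
proof -
  have coeff: "pochhammer (b + 1) n / (pochhammer b n * fact n) * x ^ n =
      x ^ n / fact n + 1 / b * (of_nat n * x ^ n / fact n)" for n
  proof -
    have "pochhammer b n \<noteq> 0"
      using assms by (auto simp: pochhammer_eq_0_iff)
    moreover have "pochhammer (b + 1) n = (b + of_nat n) / b * pochhammer b n"
      using assms pochhammer_plus_one_mult[of b n] by (simp add: field_simps)
    ultimately show ?thesis
      using assms by (simp only:) (simp add: field_simps)
  qed
  have "(\<lambda>n. x ^ n / fact n + 1 / b * (of_nat n * x ^ n / fact n)) sums (exp x + 1 / b * (x * exp x))"
    using exp_converges[of x] sums_of_nat_mult_exp_series[of x]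
    by (intro sums_add sums_mult) (simp_all add: divide_inverse mult.commute)
  then have "(\<lambda>n. pochhammer (b + 1) n / (pochhammer b n * fact n) * x ^ n) sums (exp x * (1 + x / b))"
    unfolding coeff by (simp add: algebra_simps)
  then show ?thesis
    unfolding hyp1F1_def by (rule sums_unique[symmetric])
qed

lemma hyp1F1_three_halves_one_half: "hyp1F1 (3/2) (1/2) x = exp x * (1 + 2 * x)"
  using hyp1F1_plus_one_same[of "1/2" x] by simp

lemma normal_second_moment:
  assumes "0 < \<sigma>"
  shows "has_bochner_integral lborel (\<lambda>x. normal_density \<mu> \<sigma> x * x\<^sup>2) (\<sigma>\<^sup>2 + \<mu>\<^sup>2)"
proof -
  have "has_bochner_integral lborel
      (\<lambda>x. normal_density \<mu> \<sigma> x * (x - \<mu>)\<^sup>2 + 2 * \<mu> * (normal_density \<mu> \<sigma> x * x) - \<mu>\<^sup>2 * normal_density \<mu> \<sigma> x)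
      (\<sigma>\<^sup>2 + 2 * \<mu> * \<mu> - \<mu>\<^sup>2 * 1)"
    using normal_moment_even[OF assms, of \<mu> 1] normal_moment_nz_1[OF assms, of \<mu>]
      has_bochner_integral_integrable[OF integrable_normal_density[OF assms, of \<mu>]]
    by (intro has_bochner_integral_add has_bochner_integral_diff has_bochner_integral_mult_right)
       (simp_all add: integral_normal_density[OF assms])
  then show ?thesis
    by (simp add: power2_eq_square algebra_simps)
qed

lemma nmom_density_eq_normal_density:
  assumes "0 < t"
  shows "nmom_density t x = x\<^sup>2 / t * normal_density 0 (sqrt t) x"
proof -
  have "(1/2 :: real) \<notin> \<int>\<^sub>\<le>\<^sub>0"
    by (auto dest: nonpos_Ints_nonpos)
  then have "Gamma (3/2 :: real) = sqrt pi / 2"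
    using Gamma_plus1[of "1/2 :: real"] Gamma_one_half_real by simp
  moreover have "(2 * t) powr (3/2) = 2 * t * sqrt (2 * t)"
    using assms powr_add[of "2 * t" 1 "1/2"] by (simp add: powr_half_sqrt)
  ultimately show ?thesis
    using assms by (simp add: nmom_density_def normal_density_def real_sqrt_mult field_simps)
qed

lemma normal_density_mult_normal_density:
  fixes s v x z \<mu> :: real
  assumes "0 < s" "0 < v"
  defines "m \<equiv> (v * z + s * \<mu>) / (s + v)" and "q \<equiv> s * v / (s + v)"
  shows "normal_density x (sqrt s) z * normal_density \<mu> (sqrt v) x =
    normal_density \<mu> (sqrt (s + v)) z * normal_density m (sqrt q) x"
proof -
  have quadratic: "(z - x)\<^sup>2 / s + (x - \<mu>)\<^sup>2 / v = (z - \<mu>)\<^sup>2 / (s + v) + (x - m)\<^sup>2 / q"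
  proof -
    have "((z - x)\<^sup>2 / s + (x - \<mu>)\<^sup>2 / v) * (s * v * (s + v)) =
        v * (s + v) * (z - x)\<^sup>2 + s * (s + v) * (x - \<mu>)\<^sup>2"
      using assms(1,2) by (simp add: field_simps)
    also have "\<dots> = s * v * (z - \<mu>)\<^sup>2 + ((s + v) * x - v * z - s * \<mu>)\<^sup>2"
      by (simp add: power2_eq_square algebra_simps)
    also have "(s + v) * x - v * z - s * \<mu> = (x - m) * (s + v)"
      using assms by (simp add: field_simps)
    also have "s * v * (z - \<mu>)\<^sup>2 + ((x - m) * (s + v))\<^sup>2 =
        ((z - \<mu>)\<^sup>2 / (s + v) + (x - m)\<^sup>2 / q) * (s * v * (s + v))"
    proof -
      have "y / q * (s * v * (s + v)) = y * (s + v)\<^sup>2" for y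
        using assms(1,2) unfolding q_def by (simp add: field_simps power2_eq_square)
      then show ?thesis
        using assms(1,2) by (simp add: distrib_right power_mult_distrib)
    qed
    finally show ?thesis
      using assms(1,2) by simp
  qed
  have "- a / (2 * c) + - b / (2 * d) = - (a / c + b / d) / 2" for a b c d :: real
    by (simp add: field_simps)
  then have exponent: "- (z - x)\<^sup>2 / (2 * s) + - (x - \<mu>)\<^sup>2 / (2 * v) =
      - (z - \<mu>)\<^sup>2 / (2 * (s + v)) + - (x - m)\<^sup>2 / (2 * q)"
    using quadratic by metis
  have "sqrt (2 * pi * (s + v)) * sqrt (2 * pi * q) = sqrt (2 * pi * s) * sqrt (2 * pi * v)"
    using assms by (simp add: real_sqrt_mult[symmetric] field_simps)
  moreover have "0 < q"
    using assms(1,2) by (simp add: q_def)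
  ultimately show ?thesis
    using assms(1,2) exponent by (simp add: normal_density_def mult_exp_exp)
qed

lemma m1_closed_form:
  assumes "0 < t"
  shows "m1 z t = normal_density 0 (sqrt (1 + t)) z * (1 + t * z\<^sup>2 / (1 + t)) / (1 + t)"
proof -
  define c m q where "c = normal_density 0 (sqrt (1 + t)) z / t"
    and "m = t * z / (1 + t)" and "q = t / (1 + t)"
  have "std_normal_density (z - x) * nmom_density t x = c * (normal_density m (sqrt q) x * x\<^sup>2)" for x
  proof -
    have "std_normal_density (z - x) = normal_density x (sqrt 1) z"
      by (simp add: normal_density_def)
    then show ?thesis
      using assms normal_density_mult_normal_density[of 1 t x z 0]
      by (simp add: nmom_density_eq_normal_density c_def m_def q_def)
  qed
  moreover have "has_bochner_integral lborel (\<lambda>x. c * (normal_density m (sqrt q) x * x\<^sup>2)) (c * (q + m\<^sup>2))"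
    using assms normal_second_moment[of "sqrt q" m]
    by (intro has_bochner_integral_mult_right) (simp add: q_def)
  ultimately have "has_bochner_integral lborel (\<lambda>x. std_normal_density (z - x) * nmom_density t x) (c * (q + m\<^sup>2))"
    by simp
  then have "m1 z t = c * (q + m\<^sup>2)"
    unfolding m1_def by (rule has_bochner_integral_integral_eq)
  moreover have "N / t * (t / S + (t * z / S)\<^sup>2) = N * (1 + t * z\<^sup>2 / S) / S" if "0 < S" for N S
    using assms that by (simp add: field_simps power2_eq_square)
  ultimately show ?thesis
    using assms unfolding c_def m_def q_def by simp
qed

lemma normal_density_div_std_normal_density:
  assumes "0 < s"
  shows "normal_density 0 (sqrt s) z / std_normal_density z = exp ((s - 1) * z\<^sup>2 / (2 * s)) / sqrt s"
proof -
  have "(s - 1) * z\<^sup>2 / (2 * s) = - z\<^sup>2 / (2 * s) - - z\<^sup>2 / 2"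
    using assms by (simp add: field_simps)
  then have "exp ((s - 1) * z\<^sup>2 / (2 * s)) = exp (- z\<^sup>2 / (2 * s)) / exp (- z\<^sup>2 / 2)"
    by (simp only: exp_diff)
  then show ?thesis
    using assms by (simp add: normal_density_def real_sqrt_mult)
qed

lemma m1_div_m0:
  assumes "0 < t"
  shows "m1 z t / m0 z = (1 + t) powr (-3/2) * hyp1F1 (3/2) (1/2) (t * z\<^sup>2 / (2 * (1 + t)))"
proof -
  define x where "x = t * z\<^sup>2 / (2 * (1 + t))"
  have "t * z\<^sup>2 / (1 + t) = 2 * x"
    unfolding x_def by (simp add: divide_simps)
  then have "m1 z t / m0 z =
      normal_density 0 (sqrt (1 + t)) z / std_normal_density z * (1 + 2 * x) / (1 + t)"
    using assms by (simp add: m1_closed_form m0_def)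
  also have "\<dots> = exp x / sqrt (1 + t) * (1 + 2 * x) / (1 + t)"
    using assms normal_density_div_std_normal_density[of "1 + t" z] by (simp add: x_def)
  also have "\<dots> = (1 + t) powr (-3/2) * (exp x * (1 + 2 * x))"
    using assms powr_add[of "1 + t" 1 "1/2"] by (simp add: powr_minus_divide powr_half_sqrt)
  finally show ?thesis
    by (simp add: hyp1F1_three_halves_one_half x_def)
qed

lemma mixture_ratio_eq_odds:
  fixes a b w :: real
  assumes "a \<noteq> 0"
  shows "(w * a + (1 - w) * b) / ((1 - w) * a + w * b) = (w + (1 - w) * (b / a)) / ((1 - w) + w * (b / a))"
proof -
  have "w + (1 - w) * (b / a) = (w * a + (1 - w) * b) / a"
    and "(1 - w) + w * (b / a) = ((1 - w) * a + w * b) / a"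
    using assms by (simp_all add: field_simps)
  then show ?thesis
    using assms by simp
qed

lemma BF10_eq_odds:
  "BF10 z t w = (w + (1 - w) * (m1 z t / m0 z)) / ((1 - w) + w * (m1 z t / m0 z))"
  using mixture_ratio_eq_odds[of "m0 z" w "m1 z t"] normal_density_pos[of 1 0 z]
  by (simp add: BF10_def marg_H1_def marg_H0_def m0_def)

theorem proposition4:
  fixes w tau2 z :: real
  assumes "0 < w" "w < 1/2" "0 < tau2"
  defines "R \<equiv> m1 z tau2 / m0 z"
  shows "BF10 z tau2 w = (w + (1 - w) * R) / ((1 - w) + w * R) \<and>
         R = (1 + tau2) powr (-3/2) *
             hyp1F1 (3/2) (1/2) (tau2 * z\<^sup>2 / (2 * (1 + tau2)))"
  unfolding R_def using BF10_eq_odds m1_div_m0[OF assms(3)] by blast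

end
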